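(* Consider the sequence of binary classification problems indexed by $m$ described in the context, and suppose that $N=o(m)$, $n=o(m)$, and $m=o(\min\{N^2,Nn\})$ as $m\to\infty$. Then there exists a classifier $\phi$ whose generalized error exponent satisfies $J(\phi)>0$.
   Context: For each integer $m\ge1$ let $[m]=\{1,\dots,m\}$ be the alphabet. The sample sizes $N=N(m)$ and $n=n(m)$ are positive integers with $N,n\to\infty$ as $m\to\infty$. Fix constants $\varepsilon>0$ and $\bar c>0$ (a large positive constant). Let $\mathcal P_m$ be the set of pairs $(\pi,\mu)$ of probability distributions on $[m]$ with $\|\mu-\pi\|_1\ge\varepsilon$, $\max_j\pi_j\le \bar c/m$ and $\max_j\mu_j\le\bar c/m$. Two training sequences $X=(X_1,\dots,X_N)$ i.i.d. with marginal $\pi$ and $Y=(Y_1,\dots,Y_N)$ i.i.d. with marginal $\mu$, and a test sequence $Z=(Z_1,\dots,Z_n)$ i.i.d. with marginal $\nu$ are observed, the three sequences being independent; $\mathsf P_{(\pi,\mu,\nu)}$ denotes the corresponding probability. A classifier is a sequence $\phi=\{\phi_m\}$ of functions $\phi_m:[m]^N\times[m]^N\times[m]^n\to\{0,1\}$ (output $1$ means deciding that $Z$ comes from $\mu$). Its worst-case average probability of error is $$P_e(\phi_m)=\sup_{(\pi,\mu)\in\mathcal P_m}\Big[\tfrac12\mathsf P_{(\pi,\mu,\pi)}\{\phi_m=1\}+\tfrac12\mathsf P_{(\pi,\mu,\mu)}\{\phi_m=0\}\Big].$$ With the normalization $r(N,n,m)=\min\{N^2,Nn\}/m$, the generalized error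 exponent of $\phi$ is $$J(\phi)=-\limsup_{m\to\infty}\frac{1}{r(N,n,m)}\log P_e(\phi_m).$$ *)

theory Defs
  imports "HOL-Analysis.Analysis" "HOL-Library.Landau_Symbols"
begin

definition seqs :: "nat \<Rightarrow> nat \<Rightarrow> nat list set" where
  "seqs m k = {xs. length xs = k \<and> set xs \<subseteq> {1..m}}"

definition is_dist :: "nat \<Rightarrow> (nat \<Rightarrow> real) \<Rightarrow> bool" where
  "is_dist m p \<longleftrightarrow> (\<forall>j\<in>{1..m}. 0 \<le> p j) \<and> (\<Sum>j\<in>{1..m}. p j) = 1"

definition seq_prob :: "(nat \<Rightarrow> real) \<Rightarrow> nat list \<Rightarrow> real" where
  "seq_prob p xs = prod_list (map p xs)"

definition admissible :: "real \<Rightarrow> real \<Rightarrow> nat \<Rightarrow> (nat \<Rightarrow> real) \<Rightarrow> (nat \<Rightarrow> real) \<Rightarrow> bool" where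
  "admissible \<epsilon> cbar m \<pi> \<mu> \<longleftrightarrow> is_dist m \<pi> \<and> is_dist m \<mu>
     \<and> (\<Sum>j\<in>{1..m}. \<bar>\<mu> j - \<pi> j\<bar>) \<ge> \<epsilon>
     \<and> (\<forall>j\<in>{1..m}. \<pi> j \<le> cbar / real m) \<and> (\<forall>j\<in>{1..m}. \<mu> j \<le> cbar / real m)"

text \<open>P_{(pi,mu,nu)} { phi_m = True } for training length Nm and test length nm.
  Output True of the classifier means deciding 1 (Z comes from mu).\<close>
definition prob_decide ::
  "nat \<Rightarrow> nat \<Rightarrow> nat \<Rightarrow> (nat list \<Rightarrow> nat list \<Rightarrow> nat list \<Rightarrow> bool) \<Rightarrow> bool
   \<Rightarrow> (nat \<Rightarrow> real) \<Rightarrow> (nat \<Rightarrow> real) \<Rightarrow> (nat \<Rightarrow> real) \<Rightarrow> real" where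
  "prob_decide m Nm nm \<phi> b \<pi> \<mu> \<nu> =
     (\<Sum>x\<in>seqs m Nm. \<Sum>y\<in>seqs m Nm. \<Sum>z\<in>seqs m nm.
        if \<phi> x y z = b then seq_prob \<pi> x * seq_prob \<mu> y * seq_prob \<nu> z else 0)"

text \<open>Worst-case average error probability P_e(phi_m) (Sup over an empty class is bot, i.e. treated as 0 below).\<close>
definition worst_error ::
  "real \<Rightarrow> real \<Rightarrow> nat \<Rightarrow> nat \<Rightarrow> nat \<Rightarrow> (nat list \<Rightarrow> nat list \<Rightarrow> nat list \<Rightarrow> bool) \<Rightarrow> ereal" where
  "worst_error \<epsilon> cbar m Nm nm \<phi> =
     (SUP (\<pi>, \<mu>) \<in> {(\<pi>, \<mu>). admissible \<epsilon> cbar m \<pi> \<mu>}.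
        ereal (1/2 * prob_decide m Nm nm \<phi> True \<pi> \<mu> \<pi> + 1/2 * prob_decide m Nm nm \<phi> False \<pi> \<mu> \<mu>))"

definition eln :: "ereal \<Rightarrow> ereal" where
  "eln x = (if x \<le> 0 then -\<infinity> else if x = \<infinity> then \<infinity> else ereal (ln (real_of_ereal x)))"

definition rate :: "(nat \<Rightarrow> nat) \<Rightarrow> (nat \<Rightarrow> nat) \<Rightarrow> nat \<Rightarrow> real" where
  "rate N n m = min (real (N m) ^ 2) (real (N m) * real (n m)) / real m"

definition error_exponent ::
  "real \<Rightarrow> real \<Rightarrow> (nat \<Rightarrow> nat) \<Rightarrow> (nat \<Rightarrow> nat)
   \<Rightarrow> (nat \<Rightarrow> nat list \<Rightarrow> nat list \<Rightarrow> nat list \<Rightarrow> bool) \<Rightarrow> ereal" where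
  "error_exponent \<epsilon> cbar N n \<phi> =
     - limsup (\<lambda>m. eln (worst_error \<epsilon> cbar m (N m) (n m) (\<phi> m)) * ereal (1 / rate N n m))"

end

theory Submission
  imports Defs
begin

text \<open>
  For samples \<open>A\<close> of \<open>\<alpha>\<close> and \<open>B\<close> of \<open>\<beta>\<close> of sizes \<open>a\<close> and \<open>b\<close>, let \<open>hits A B\<close> count the
  entries of \<open>A\<close> that occur in \<open>B\<close>; then \<open>hits A B / (a b)\<close> estimates the collision
  probability \<open>\<Sum>j. \<alpha> j * \<beta> j\<close>. Splitting both training sequences into halves
  \<open>X\<^sub>1 X\<^sub>2\<close> and \<open>Y\<^sub>1 Y\<^sub>2\<close>, the statistic
  \<open>hit_rate Z Y\<^sub>1 - hit_rate Z X\<^sub>1 - (hit_rate Y\<^sub>1 Y\<^sub>2 - hit_rate X\<^sub>1 X\<^sub>2) / 2\<close>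
  has mean \<open>-\<parallel>\<mu> - \<pi>\<parallel>\<^sup>2 / 2\<close> if \<open>Z\<close> is drawn from \<open>\<pi>\<close> and \<open>\<parallel>\<mu> - \<pi>\<parallel>\<^sup>2 / 2\<close> if it is
  drawn from \<open>\<mu>\<close>, and \<open>\<parallel>\<mu> - \<pi>\<parallel>\<^sup>2 \<ge> \<epsilon>\<^sup>2 / m\<close> by Cauchy-Schwarz. Deciding by its sign, an
  error forces one of the four hit rates to deviate from its mean by \<open>\<epsilon>\<^sup>2 / (6 m)\<close>.

  Given \<open>B\<close>, the number of hits is binomial with parameter \<open>\<alpha>(set B)\<close>, which lies between the
  sum of \<open>\<alpha>\<close> over the entries of \<open>B\<close> and that sum minus \<open>c / m\<close> times the number of repeated
  entries of \<open>B\<close>. Chernoff bounds for the hits, the sum and the repeats bound the deviation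
  probability by \<open>5 exp (- \<kappa> a b / m)\<close> as long as \<open>b \<le> \<eta> m / (16 c\<^sup>2)\<close>, which holds eventually
  because \<open>N = o(m)\<close>. The sample sizes \<open>a b\<close> used are of order \<open>min (N\<^sup>2) (N n)\<close>, and
  \<open>m = o(min (N\<^sup>2) (N n))\<close> makes the normalized logarithm of the error tend below \<open>-\<kappa> / 12\<close>.
\<close>

section \<open>Expectations over i.i.d.\ sequences\<close>

lemma seqs_0 [simp]: "seqs m 0 = {[]}"
  by (auto simp: seqs_def)

lemma seqs_Suc: "seqs m (Suc k) = (\<lambda>(j, x). j # x) ` ({1..m} \<times> seqs m k)"
  unfolding seqs_def by (auto simp: image_iff length_Suc_conv)

lemma seqs_add: "seqs m (h + k) = (\<lambda>(a, b). a @ b) ` (seqs m h \<times> seqs m k)"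
proof (intro equalityI subsetI)
  fix x assume "x \<in> seqs m (h + k)"
  then have "x = take h x @ drop h x" "take h x \<in> seqs m h" "drop h x \<in> seqs m k"
    by (auto simp: seqs_def dest: in_set_takeD in_set_dropD)
  then show "x \<in> (\<lambda>(a, b). a @ b) ` (seqs m h \<times> seqs m k)"
    by (metis (no_types, lifting) SigmaI case_prod_conv image_eqI)
qed (auto simp: seqs_def subset_iff)

lemma finite_seqs: "finite (seqs m k)"
  by (induction k) (simp_all add: seqs_Suc)

lemma seqs_length: "x \<in> seqs m k \<Longrightarrow> length x = k"
  and seqs_letters: "x \<in> seqs m k \<Longrightarrow> set x \<subseteq> {1..m}"
  by (simp_all add: seqs_def)

lemma seq_prob_nonneg: "is_dist m p \<Longrightarrow> x \<in> seqs m k \<Longrightarrow> 0 \<le> seq_prob p x"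
  unfolding seq_prob_def is_dist_def seqs_def by (intro prod_list_nonneg) auto

definition seq_expectation :: "nat \<Rightarrow> nat \<Rightarrow> (nat \<Rightarrow> real) \<Rightarrow> (nat list \<Rightarrow> real) \<Rightarrow> real" where
  "seq_expectation m k p f = (\<Sum>x\<in>seqs m k. seq_prob p x * f x)"

lemma seq_expectation_Suc:
  "seq_expectation m (Suc k) p f = seq_expectation m k p (\<lambda>x. \<Sum>j\<in>{1..m}. p j * f (j # x))"
proof -
  have inj: "inj_on (\<lambda>(j, x). j # x) ({1..m} \<times> seqs m k)" by (auto simp: inj_on_def)
  have "seq_expectation m (Suc k) p f = (\<Sum>j\<in>{1..m}. \<Sum>x\<in>seqs m k. seq_prob p (j # x) * f (j # x))"
    unfolding seq_expectation_def seqs_Suc sum.reindex[OF inj]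
    by (simp add: sum.cartesian_product split_beta)
  also have "\<dots> = (\<Sum>x\<in>seqs m k. \<Sum>j\<in>{1..m}. seq_prob p (j # x) * f (j # x))"
    by (rule sum.swap)
  finally show ?thesis
    by (simp add: seq_expectation_def seq_prob_def sum_distrib_left algebra_simps)
qed

lemma seq_expectation_add:
  "seq_expectation m (h + k) p f = seq_expectation m h p (\<lambda>a. seq_expectation m k p (\<lambda>b. f (a @ b)))"
proof -
  have inj: "inj_on (\<lambda>(a, b). a @ b) (seqs m h \<times> seqs m k)" by (auto simp: inj_on_def seqs_def)
  show ?thesis
    unfolding seq_expectation_def seqs_add sum.reindex[OF inj]
    by (simp add: sum.cartesian_product finite_seqs split_beta seq_prob_def
        sum_distrib_left mult.assoc)
qed

lemma seq_expectation_cmult: "seq_expectation m k p (\<lambda>x. c * f x) = c * seq_expectation m k p f"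
  by (simp add: seq_expectation_def sum_distrib_left algebra_simps)

lemma seq_expectation_plus:
  "seq_expectation m k p (\<lambda>x. f x + g x) = seq_expectation m k p f + seq_expectation m k p g"
  by (simp add: seq_expectation_def sum.distrib distrib_left)

lemma seq_expectation_swap:
  "seq_expectation m k p (\<lambda>x. seq_expectation m l q (\<lambda>y. f x y))
     = seq_expectation m l q (\<lambda>y. seq_expectation m k p (\<lambda>x. f x y))"
  unfolding seq_expectation_def sum_distrib_left
  by (subst sum.swap) (simp add: algebra_simps)

lemma seq_expectation_mono:
  assumes "is_dist m p" "\<And>x. x \<in> seqs m k \<Longrightarrow> f x \<le> g x"
  shows "seq_expectation m k p f \<le> seq_expectation m k p g"
  unfolding seq_expectation_def using assms
  by (intro sum_mono mult_left_mono) (auto intro: seq_prob_nonneg)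

lemma seq_expectation_cong:
  "(\<And>x. x \<in> seqs m k \<Longrightarrow> f x = g x) \<Longrightarrow> seq_expectation m k p f = seq_expectation m k p g"
  unfolding seq_expectation_def by simp

lemma seq_expectation_prod_list:
  "seq_expectation m k p (\<lambda>x. prod_list (map g x)) = (\<Sum>j\<in>{1..m}. p j * g j) ^ k"
proof (induction k)
  case 0
  show ?case by (simp add: seq_expectation_def seq_prob_def)
next
  case (Suc k)
  have "seq_expectation m (Suc k) p (\<lambda>x. prod_list (map g x))
      = seq_expectation m k p (\<lambda>x. (\<Sum>j\<in>{1..m}. p j * g j) * prod_list (map g x))"
    unfolding seq_expectation_Suc by (simp add: sum_distrib_right mult.assoc)
  then show ?case by (simp add: seq_expectation_cmult Suc)
qed

lemma seq_expectation_const: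
  assumes "is_dist m p"
  shows "seq_expectation m k p (\<lambda>_. c) = c"
proof -
  have ones: "(\<lambda>x. prod_list (map (\<lambda>_. 1) x)) = (\<lambda>_. 1::real)"
  proof
    show "prod_list (map (\<lambda>_. 1) x) = (1::real)" for x by (induction x) auto
  qed
  have "seq_expectation m k p (\<lambda>_. 1) = 1"
    using seq_expectation_prod_list[of m k p "\<lambda>_. 1", unfolded ones] assms by (simp add: is_dist_def)
  then show ?thesis using seq_expectation_cmult[of m k p c "\<lambda>_. 1"] by simp
qed

lemma seq_expectation_split:
  assumes "h \<le> k"
  shows "seq_expectation m k p (\<lambda>x. f (take h x) (drop h x))
       = seq_expectation m h p (\<lambda>a. seq_expectation m (k - h) p (f a))"
  using seq_expectation_add[of m h "k - h" p "\<lambda>x. f (take h x) (drop h x)"] assms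
  by (auto intro!: seq_expectation_cong simp: seqs_length)

lemma seq_expectation_take:
  "h \<le> k \<Longrightarrow> is_dist m p \<Longrightarrow> seq_expectation m k p (\<lambda>x. f (take h x)) = seq_expectation m h p f"
  using seq_expectation_split[of h k m p "\<lambda>a b. f a"] by (simp add: seq_expectation_const)

section \<open>Chernoff bounds for hits, weights and repeats\<close>

lemma exp_le_quadratic:
  fixes x :: real
  assumes "x \<le> 1"
  shows "exp x \<le> 1 + x + x\<^sup>2"
proof (cases "0 \<le> x")
  case True
  then show ?thesis using exp_bound assms by simp
next
  case False
  have "0 \<le> (x + 1/2)\<^sup>2" by simp
  then have pos: "0 < 1 + x + x\<^sup>2" by (simp add: power2_eq_square algebra_simps)
  have "(1 - x) * (1 + x + x\<^sup>2) = 1 - x * x * x" by (simp add: algebra_simps power2_eq_square)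
  then have "1 \<le> (1 - x) * (1 + x + x\<^sup>2)"
    using mult_nonneg_nonpos[OF zero_le_square, of x x] False by simp
  also have "\<dots> \<le> exp (- x) * (1 + x + x\<^sup>2)"
    using exp_ge_add_one_self[of "- x"] pos by (intro mult_right_mono) auto
  finally have "1 \<le> exp (- x) * (1 + x + x\<^sup>2)" .
  then show ?thesis by (simp add: exp_minus field_simps)
qed

lemma chernoff_bound:
  assumes p: "is_dist m p" and \<theta>: "0 \<le> \<theta>"
    and mgf: "seq_expectation m k p (\<lambda>x. exp (\<theta> * f x)) \<le> exp (\<theta> * c + v)"
  shows "seq_expectation m k p (\<lambda>x. of_bool (c + D \<le> f x)) \<le> exp (v - \<theta> * D)"
proof -
  have "seq_expectation m k p (\<lambda>x. of_bool (c + D \<le> f x))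
      \<le> seq_expectation m k p (\<lambda>x. exp (- \<theta> * (c + D)) * exp (\<theta> * f x))"
  proof (rule seq_expectation_mono[OF p])
    fix x
    have "of_bool (c + D \<le> f x) \<le> exp (\<theta> * (f x - (c + D)))"
      using \<theta> by (cases "c + D \<le> f x") auto
    then show "of_bool (c + D \<le> f x) \<le> exp (- \<theta> * (c + D)) * exp (\<theta> * f x)"
      by (simp add: exp_add[symmetric] algebra_simps)
  qed
  also have "\<dots> \<le> exp (- \<theta> * (c + D)) * exp (\<theta> * c + v)"
    using mgf by (simp add: seq_expectation_cmult)
  also have "\<dots> = exp (v - \<theta> * D)"
    by (simp add: exp_add[symmetric] algebra_simps)
  finally show ?thesis .
qed

definition hits :: "nat list \<Rightarrow> nat list \<Rightarrow> nat" where
  "hits A B = length (filter (\<lambda>x. x \<in> set B) A)"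

definition mass :: "(nat \<Rightarrow> real) \<Rightarrow> nat list \<Rightarrow> real" where
  "mass \<alpha> B = (\<Sum>j\<in>set B. \<alpha> j)"

definition weight :: "(nat \<Rightarrow> real) \<Rightarrow> nat list \<Rightarrow> real" where
  "weight \<alpha> B = sum_list (map \<alpha> B)"

fun repeats :: "nat list \<Rightarrow> nat" where
  "repeats [] = 0"
| "repeats (x # xs) = repeats xs + of_bool (x \<in> set xs)"

definition collision :: "nat \<Rightarrow> (nat \<Rightarrow> real) \<Rightarrow> (nat \<Rightarrow> real) \<Rightarrow> real" where
  "collision m \<alpha> \<beta> = (\<Sum>j\<in>{1..m}. \<alpha> j * \<beta> j)"

lemma collision_commute: "collision m \<alpha> \<beta> = collision m \<beta> \<alpha>"
  by (simp add: collision_def mult.commute)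

lemma collision_bounds:
  assumes "is_dist m \<beta>" "\<forall>j\<in>{1..m}. 0 \<le> \<alpha> j \<and> \<alpha> j \<le> c"
  shows "0 \<le> collision m \<alpha> \<beta>" "collision m \<alpha> \<beta> \<le> c"
proof -
  show "0 \<le> collision m \<alpha> \<beta>" using assms unfolding collision_def is_dist_def by (intro sum_nonneg) auto
  have "collision m \<alpha> \<beta> \<le> (\<Sum>j\<in>{1..m}. c * \<beta> j)"
    using assms unfolding collision_def is_dist_def by (intro sum_mono mult_right_mono) auto
  also have "\<dots> = c" using assms(1) by (simp add: sum_distrib_left[symmetric] is_dist_def)
  finally show "collision m \<alpha> \<beta> \<le> c" .
qed

lemma mass_nonneg: "is_dist m \<alpha> \<Longrightarrow> set B \<subseteq> {1..m} \<Longrightarrow> 0 \<le> mass \<alpha> B"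
  unfolding mass_def is_dist_def by (intro sum_nonneg) auto

lemma mass_le_1:
  assumes "is_dist m \<alpha>" "set B \<subseteq> {1..m}"
  shows "mass \<alpha> B \<le> 1"
proof -
  have "mass \<alpha> B \<le> (\<Sum>j\<in>{1..m}. \<alpha> j)"
    unfolding mass_def using assms by (intro sum_mono2) (auto simp: is_dist_def)
  then show ?thesis using assms(1) by (simp add: is_dist_def)
qed

lemma mass_le_length:
  assumes "\<forall>j\<in>set B. \<alpha> j \<le> c" "0 \<le> c"
  shows "mass \<alpha> B \<le> real (length B) * c"
proof -
  have "mass \<alpha> B \<le> real (card (set B)) * c"
    unfolding mass_def using assms(1) sum_mono[of "set B" \<alpha> "\<lambda>_. c"] by simp
  also have "\<dots> \<le> real (length B) * c" using assms(2) by (intro mult_right_mono) (auto simp: card_length)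
  finally show ?thesis .
qed

lemma mass_Cons: "mass \<alpha> (x # xs) = (if x \<in> set xs then mass \<alpha> xs else \<alpha> x + mass \<alpha> xs)"
  by (simp add: mass_def insert_absorb)

lemma mass_le_weight: "\<forall>j\<in>set B. 0 \<le> \<alpha> j \<Longrightarrow> mass \<alpha> B \<le> weight \<alpha> B"
  by (induction B) (auto simp: mass_Cons weight_def mass_def[of _ "[]"])

lemma weight_le_mass_repeats: "\<forall>j\<in>set B. \<alpha> j \<le> c \<Longrightarrow> weight \<alpha> B \<le> mass \<alpha> B + c * repeats B"
  by (induction B) (auto simp: mass_Cons weight_def mass_def[of _ "[]"] algebra_simps)

lemma power_le_exp_mult:
  fixes x y :: real
  assumes "0 \<le> x" "x \<le> exp y"
  shows "x ^ k \<le> exp (real k * y)"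
  using power_mono[OF assms(2,1), of k] by (simp add: exp_of_nat_mult)

lemma hits_mgf:
  fixes l :: real
  assumes "is_dist m \<alpha>" "set B \<subseteq> {1..m}"
  shows "seq_expectation m a \<alpha> (\<lambda>A. exp (l * real (hits A B))) = (1 + mass \<alpha> B * (exp l - 1)) ^ a"
proof -
  have prod: "exp (l * real (hits A B)) = prod_list (map (\<lambda>j. exp (l * of_bool (j \<in> set B))) A)" for A
    by (induction A) (auto simp: hits_def exp_add distrib_left)
  have "(\<Sum>j\<in>{1..m}. \<alpha> j * exp (l * of_bool (j \<in> set B)))
      = (\<Sum>j\<in>{1..m}. \<alpha> j + (if j \<in> set B then \<alpha> j * (exp l - 1) else 0))"
    by (intro sum.cong) (auto simp: algebra_simps)
  also have "\<dots> = 1 + (\<Sum>j\<in>{1..m} \<inter> set B. \<alpha> j * (exp l - 1))"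
    using assms(1) by (simp add: sum.distrib sum.inter_restrict[symmetric] is_dist_def)
  also have "{1..m} \<inter> set B = set B" using assms(2) by auto
  finally show ?thesis
    unfolding prod seq_expectation_prod_list by (simp add: mass_def sum_distrib_right)
qed

lemma hits_mgf_le:
  fixes l Q :: real
  assumes \<alpha>: "is_dist m \<alpha>" and B: "set B \<subseteq> {1..m}" and l: "l \<le> 1" and Q: "mass \<alpha> B \<le> Q"
  shows "seq_expectation m a \<alpha> (\<lambda>A. exp (l * real (hits A B))) \<le> exp (l * (real a * mass \<alpha> B) + real a * Q * l\<^sup>2)"
proof -
  define q where "q = mass \<alpha> B"
  have q: "0 \<le> q" "q \<le> 1" unfolding q_def using mass_nonneg[OF \<alpha> B] mass_le_1[OF \<alpha> B] .
  have "0 \<le> q * exp l" using q(1) by simp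
  then have "0 \<le> 1 + q * (exp l - 1)" using q(2) by (simp add: algebra_simps)
  moreover have "1 + q * (exp l - 1) \<le> exp (l * q + Q * l\<^sup>2)"
  proof -
    have "q * (exp l - 1) \<le> q * (l + l\<^sup>2)"
      using exp_le_quadratic[OF l] q by (intro mult_left_mono) auto
    moreover have "q * l\<^sup>2 \<le> Q * l\<^sup>2" using Q by (simp add: q_def mult_right_mono)
    ultimately have "1 + q * (exp l - 1) \<le> 1 + (l * q + Q * l\<^sup>2)" by (simp add: algebra_simps)
    also have "\<dots> \<le> exp (l * q + Q * l\<^sup>2)" by (rule exp_ge_add_one_self)
    finally show ?thesis .
  qed
  ultimately have "(1 + q * (exp l - 1)) ^ a \<le> exp (real a * (l * q + Q * l\<^sup>2))"
    by (rule power_le_exp_mult)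
  also have "\<dots> = exp (l * (real a * q) + real a * Q * l\<^sup>2)"
    by (simp add: algebra_simps)
  finally show ?thesis unfolding hits_mgf[OF \<alpha> B] q_def .
qed

lemma hits_upper_tail:
  fixes l Q D :: real
  assumes "is_dist m \<alpha>" "set B \<subseteq> {1..m}" "mass \<alpha> B \<le> Q" "0 \<le> l" "l \<le> 1"
  shows "seq_expectation m a \<alpha> (\<lambda>A. of_bool (real a * mass \<alpha> B + D \<le> real (hits A B)))
     \<le> exp (real a * Q * l\<^sup>2 - l * D)"
  using chernoff_bound[OF assms(1,4) hits_mgf_le[OF assms(1,2,5,3)]] .

lemma hits_lower_tail:
  fixes l Q D :: real
  assumes "is_dist m \<alpha>" "set B \<subseteq> {1..m}" "mass \<alpha> B \<le> Q" "0 \<le> l"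
  shows "seq_expectation m a \<alpha> (\<lambda>A. of_bool (real (hits A B) \<le> real a * mass \<alpha> B - D))
     \<le> exp (real a * Q * l\<^sup>2 - l * D)"
proof -
  have mgf: "seq_expectation m a \<alpha> (\<lambda>A. exp (l * - real (hits A B)))
      \<le> exp (l * - (real a * mass \<alpha> B) + real a * Q * l\<^sup>2)"
    using hits_mgf_le[OF assms(1,2) _ assms(3), of "- l" a] assms(4) by simp
  have event: "(\<lambda>A. of_bool (real (hits A B) \<le> real a * mass \<alpha> B - D))
      = (\<lambda>A. of_bool (- (real a * mass \<alpha> B) + D \<le> - real (hits A B)))"
    by (rule ext, rule arg_cong[where f = of_bool]) linarith
  show ?thesis unfolding event by (rule chernoff_bound[OF assms(1,4) mgf])
qed

lemma weight_mgf_le: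
  assumes \<beta>: "is_dist m \<beta>" and \<alpha>: "\<forall>j\<in>{1..m}. 0 \<le> \<alpha> j \<and> \<alpha> j \<le> c" and \<theta>: "\<bar>\<theta>\<bar> * c \<le> 1"
  shows "seq_expectation m b \<beta> (\<lambda>B. exp (\<theta> * weight \<alpha> B))
     \<le> exp (\<theta> * (real b * collision m \<alpha> \<beta>) + real b * \<theta>\<^sup>2 * c * collision m \<alpha> \<beta>)"
proof -
  define g where "g = collision m \<alpha> \<beta>"
  have prod: "exp (\<theta> * weight \<alpha> B) = prod_list (map (\<lambda>j. exp (\<theta> * \<alpha> j)) B)" for B
    by (induction B) (auto simp: weight_def exp_add distrib_left)
  have "(\<Sum>j\<in>{1..m}. \<beta> j * exp (\<theta> * \<alpha> j))
      \<le> (\<Sum>j\<in>{1..m}. \<beta> j * (1 + \<theta> * \<alpha> j + \<theta>\<^sup>2 * c * \<alpha> j))"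
  proof (intro sum_mono mult_left_mono)
    fix j assume j: "j \<in> {1..m}"
    then have a: "0 \<le> \<alpha> j" "\<alpha> j \<le> c" using \<alpha> by auto
    have "\<theta> * \<alpha> j \<le> \<bar>\<theta>\<bar> * \<alpha> j" using a by (intro mult_right_mono) auto
    also have "\<dots> \<le> \<bar>\<theta>\<bar> * c" using a by (intro mult_left_mono) auto
    finally have "\<theta> * \<alpha> j \<le> \<bar>\<theta>\<bar> * c" .
    then have "exp (\<theta> * \<alpha> j) \<le> 1 + \<theta> * \<alpha> j + (\<theta> * \<alpha> j)\<^sup>2"
      using \<theta> by (intro exp_le_quadratic) linarith
    also have "(\<theta> * \<alpha> j)\<^sup>2 \<le> \<theta>\<^sup>2 * c * \<alpha> j"
    proof -
      have "\<alpha> j * \<alpha> j \<le> c * \<alpha> j" using a by (intro mult_right_mono)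
      then have "\<theta>\<^sup>2 * (\<alpha> j * \<alpha> j) \<le> \<theta>\<^sup>2 * (c * \<alpha> j)" by (intro mult_left_mono) auto
      then show ?thesis by (simp add: power_mult_distrib power2_eq_square mult_ac)
    qed
    finally show "exp (\<theta> * \<alpha> j) \<le> 1 + \<theta> * \<alpha> j + \<theta>\<^sup>2 * c * \<alpha> j" by simp
    show "0 \<le> \<beta> j" using \<beta> j by (simp add: is_dist_def)
  qed
  also have "\<dots> = (\<Sum>j\<in>{1..m}. \<beta> j) + \<theta> * (\<Sum>j\<in>{1..m}. \<alpha> j * \<beta> j)
      + \<theta>\<^sup>2 * c * (\<Sum>j\<in>{1..m}. \<alpha> j * \<beta> j)"
    by (simp add: sum.distrib sum_distrib_left algebra_simps)
  also have "\<dots> = 1 + (\<theta> * g + \<theta>\<^sup>2 * c * g)"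
    using \<beta> by (simp add: is_dist_def g_def collision_def)
  also have "\<dots> \<le> exp (\<theta> * g + \<theta>\<^sup>2 * c * g)" by (rule exp_ge_add_one_self)
  finally have "(\<Sum>j\<in>{1..m}. \<beta> j * exp (\<theta> * \<alpha> j)) ^ b \<le> exp (real b * (\<theta> * g + \<theta>\<^sup>2 * c * g))"
    using \<beta> by (intro power_le_exp_mult sum_nonneg) (auto simp: is_dist_def)
  also have "\<dots> = exp (\<theta> * (real b * g) + real b * \<theta>\<^sup>2 * c * g)" by (simp add: algebra_simps)
  finally show ?thesis unfolding prod seq_expectation_prod_list g_def .
qed

lemma weight_upper_tail:
  assumes "is_dist m \<beta>" "\<forall>j\<in>{1..m}. 0 \<le> \<alpha> j \<and> \<alpha> j \<le> c" "0 \<le> \<theta>" "\<theta> * c \<le> 1"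
  shows "seq_expectation m b \<beta> (\<lambda>B. of_bool (real b * collision m \<alpha> \<beta> + D \<le> weight \<alpha> B))
     \<le> exp (real b * \<theta>\<^sup>2 * c * collision m \<alpha> \<beta> - \<theta> * D)"
  using assms by (intro chernoff_bound weight_mgf_le) auto

lemma weight_lower_tail:
  assumes "is_dist m \<beta>" "\<forall>j\<in>{1..m}. 0 \<le> \<alpha> j \<and> \<alpha> j \<le> c" "0 \<le> \<theta>" "\<theta> * c \<le> 1"
  shows "seq_expectation m b \<beta> (\<lambda>B. of_bool (weight \<alpha> B \<le> real b * collision m \<alpha> \<beta> - D))
     \<le> exp (real b * \<theta>\<^sup>2 * c * collision m \<alpha> \<beta> - \<theta> * D)"
proof -
  have mgf: "seq_expectation m b \<beta> (\<lambda>B. exp (\<theta> * - weight \<alpha> B))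
      \<le> exp (\<theta> * - (real b * collision m \<alpha> \<beta>) + real b * \<theta>\<^sup>2 * c * collision m \<alpha> \<beta>)"
    using weight_mgf_le[OF assms(1,2), of "- \<theta>" b] assms(3,4) by simp
  have event: "(\<lambda>B. of_bool (weight \<alpha> B \<le> real b * collision m \<alpha> \<beta> - D))
      = (\<lambda>B. of_bool (- (real b * collision m \<alpha> \<beta>) + D \<le> - weight \<alpha> B))"
    by (rule ext, rule arg_cong[where f = of_bool]) linarith
  show ?thesis unfolding event by (rule chernoff_bound[OF assms(1,3) mgf])
qed

lemma repeats_mgf_le:
  assumes \<beta>: "is_dist m \<beta>" "\<forall>j\<in>{1..m}. \<beta> j \<le> c" and c: "0 \<le> c"
  shows "seq_expectation m b \<beta> (\<lambda>B. exp (repeats B)) \<le> exp (2 * real b ^ 2 * c)"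
proof (induction b)
  case 0
  show ?case by (simp add: seq_expectation_def seq_prob_def)
next
  case (Suc k)
  have step: "(\<Sum>j\<in>{1..m}. \<beta> j * exp (repeats (j # x))) \<le> exp (2 * real k * c) * exp (repeats x)"
    if x: "x \<in> seqs m k" for x
  proof -
    have "\<beta> j * exp (repeats (j # x))
        = (\<beta> j + (if j \<in> set x then \<beta> j * (exp 1 - 1) else 0)) * exp (repeats x)" for j
      by (auto simp: exp_add algebra_simps)
    then have "(\<Sum>j\<in>{1..m}. \<beta> j * exp (repeats (j # x)))
        = (\<Sum>j\<in>{1..m}. \<beta> j + (if j \<in> set x then \<beta> j * (exp 1 - 1) else 0)) * exp (repeats x)"
      by (simp add: sum_distrib_right)
    also have "(\<Sum>j\<in>{1..m}. \<beta> j + (if j \<in> set x then \<beta> j * (exp 1 - 1) else 0))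
        = 1 + mass \<beta> x * (exp 1 - 1)"
      using \<beta>(1) seqs_letters[OF x]
      by (simp add: sum.distrib sum.inter_restrict[symmetric] is_dist_def mass_def
          sum_distrib_right Int_absorb1)
    also have "\<dots> \<le> 1 + 2 * real k * c"
    proof -
      have "mass \<beta> x \<le> real k * c"
        using mass_le_length[of x \<beta> c] \<beta>(2) seqs_letters[OF x] seqs_length[OF x] c by auto
      moreover have "exp 1 - 1 \<le> (2::real)" using exp_le by simp
      ultimately have "mass \<beta> x * (exp 1 - 1) \<le> real k * c * 2"
        using mass_nonneg[OF \<beta>(1) seqs_letters[OF x]] by (intro mult_mono) auto
      then show ?thesis by simp
    qed
    also have "\<dots> \<le> exp (2 * real k * c)" by (rule exp_ge_add_one_self)
    finally show ?thesis by (simp add: mult_right_mono)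
  qed
  have "seq_expectation m (Suc k) \<beta> (\<lambda>B. exp (repeats B))
      \<le> seq_expectation m k \<beta> (\<lambda>x. exp (2 * real k * c) * exp (repeats x))"
    unfolding seq_expectation_Suc by (rule seq_expectation_mono[OF \<beta>(1) step])
  also have "\<dots> \<le> exp (2 * real k * c) * exp (2 * real k ^ 2 * c)"
    using Suc by (simp add: seq_expectation_cmult)
  also have "\<dots> \<le> exp (2 * real (Suc k) ^ 2 * c)"
    using c by (simp add: exp_add[symmetric] power2_eq_square algebra_simps)
  finally show ?case .
qed

lemma repeats_upper_tail:
  fixes r :: real
  assumes "is_dist m \<beta>" "\<forall>j\<in>{1..m}. \<beta> j \<le> c" "0 \<le> c"
  shows "seq_expectation m b \<beta> (\<lambda>B. of_bool (r \<le> repeats B)) \<le> exp (2 * real b ^ 2 * c - r)"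
  using chernoff_bound[of m \<beta> 1 b "\<lambda>B. real (repeats B)" 0 "2 * real b ^ 2 * c" r]
    repeats_mgf_le[OF assms] assms(1) by simp

section \<open>Concentration of the hit rate\<close>

definition hit_rate :: "nat list \<Rightarrow> nat list \<Rightarrow> real" where
  "hit_rate A B = real (hits A B) / (real (length A) * real (length B))"

text \<open>The three terms are the Chernoff exponents of \<open>hits_deviation\<close>,
  \<open>weight_deviation\<close> and \<open>repeats_deviation\<close>, for the tilts \<open>min 1 (\<eta> / (4 c))\<close> and
  \<open>min (1 / c) (\<eta> / (8 c\<^sup>2))\<close>.\<close>

definition deviation_rate :: "real \<Rightarrow> real \<Rightarrow> real" where
  "deviation_rate c \<eta> =
     min (min 1 (\<eta> / (4 * c)) * \<eta> / 4) (min (min (1 / c) (\<eta> / (8 * c\<^sup>2)) * \<eta> / 8) (\<eta> / (8 * c)))"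

lemma deviation_rate_pos: "0 < c \<Longrightarrow> 0 < \<eta> \<Longrightarrow> 0 < deviation_rate c \<eta>"
  unfolding deviation_rate_def by auto

lemma hits_deviation:
  fixes c \<eta> :: real and a b :: nat
  assumes \<alpha>: "is_dist m \<alpha>" "\<forall>j\<in>{1..m}. \<alpha> j \<le> c / m"
    and c: "0 < c" and \<eta>: "0 < \<eta>" and m: "0 < m" and B: "B \<in> seqs m b"
  defines "D \<equiv> real a * real b * (\<eta> / m) / 2"
  shows "seq_expectation m a \<alpha> (\<lambda>A. of_bool (real a * mass \<alpha> B + D \<le> real (hits A B))
           + of_bool (real (hits A B) \<le> real a * mass \<alpha> B - D))
         \<le> 2 * exp (- (deviation_rate c \<eta> * (real a * real b / m)))"
proof -
  define l where "l = min 1 (\<eta> / (4 * c))"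
  define Q where "Q = real b * (c / m)"
  have l: "0 \<le> l" "l \<le> 1" using \<eta> c by (auto simp: l_def)
  have "c * l \<le> c * (\<eta> / (4 * c))" using c by (intro mult_left_mono) (auto simp: l_def)
  then have cl: "c * l \<le> \<eta> / 4" using c by simp
  have Q: "mass \<alpha> B \<le> Q"
    using mass_le_length[of B \<alpha> "c / m"] \<alpha>(2) c seqs_letters[OF B] seqs_length[OF B]
    by (auto simp: Q_def)
  have "c * l * l \<le> \<eta> / 4 * l" using l cl by (intro mult_right_mono) auto
  moreover have "deviation_rate c \<eta> \<le> l * \<eta> / 4"
    unfolding deviation_rate_def l_def by (rule min.cobounded1)
  ultimately have "c * l\<^sup>2 - l * \<eta> / 2 \<le> - deviation_rate c \<eta>"
    by (simp add: power2_eq_square algebra_simps)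
  then have "real a * real b / m * (c * l\<^sup>2 - l * \<eta> / 2)
      \<le> real a * real b / m * (- deviation_rate c \<eta>)"
    by (intro mult_left_mono) auto
  moreover have "real a * Q * l\<^sup>2 - l * D = real a * real b / m * (c * l\<^sup>2 - l * \<eta> / 2)"
    using m by (simp add: Q_def D_def field_simps)
  ultimately have exponent: "real a * Q * l\<^sup>2 - l * D \<le> - (deviation_rate c \<eta> * (real a * real b / m))"
    by (simp add: mult.commute)
  have "seq_expectation m a \<alpha> (\<lambda>A. of_bool (real a * mass \<alpha> B + D \<le> real (hits A B))) \<le> exp (real a * Q * l\<^sup>2 - l * D)"
    by (rule hits_upper_tail[OF \<alpha>(1) seqs_letters[OF B] Q l(1,2)])
  moreover have "seq_expectation m a \<alpha> (\<lambda>A. of_bool (real (hits A B) \<le> real a * mass \<alpha> B - D)) \<le> exp (real a * Q * l\<^sup>2 - l * D)"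
    by (rule hits_lower_tail[OF \<alpha>(1) seqs_letters[OF B] Q l(1)])
  moreover have "exp (real a * Q * l\<^sup>2 - l * D) \<le> exp (- (deviation_rate c \<eta> * (real a * real b / m)))"
    using exponent by simp
  ultimately show ?thesis unfolding seq_expectation_plus by linarith
qed

lemma weight_deviation:
  fixes c \<eta> :: real and b :: nat
  assumes \<beta>: "is_dist m \<beta>" and \<alpha>: "\<forall>j\<in>{1..m}. 0 \<le> \<alpha> j \<and> \<alpha> j \<le> c / m"
    and c: "0 < c" and \<eta>: "0 < \<eta>" and m: "0 < m"
  defines "D \<equiv> real b * (\<eta> / m) / 4"
  shows "seq_expectation m b \<beta> (\<lambda>B. of_bool (real b * collision m \<alpha> \<beta> + D \<le> weight \<alpha> B)
           + of_bool (weight \<alpha> B \<le> real b * collision m \<alpha> \<beta> - D))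
         \<le> 2 * exp (- (deviation_rate c \<eta> * real b))"
proof -
  define t where "t = min (1 / c) (\<eta> / (8 * c\<^sup>2))"
  define \<theta> where "\<theta> = t * m"
  define g where "g = collision m \<alpha> \<beta>"
  have t: "0 \<le> t" "t * c \<le> 1" "t * c\<^sup>2 \<le> \<eta> / 8"
    using c \<eta> by (auto simp: t_def field_simps min_def)
  have \<theta>: "0 \<le> \<theta>" "\<theta> * (c / m) \<le> 1" using t m by (auto simp: \<theta>_def)
  have g: "0 \<le> g" "g \<le> c / m" using collision_bounds[OF \<beta> \<alpha>] by (auto simp: g_def)
  have "real b * \<theta>\<^sup>2 * (c / m) * g \<le> real b * \<theta>\<^sup>2 * (c / m) * (c / m)"
    using g c by (intro mult_left_mono) auto
  also have "\<dots> = real b * t * (t * c\<^sup>2)" using m by (simp add: \<theta>_def field_simps power2_eq_square)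
  also have "\<dots> \<le> real b * t * (\<eta> / 8)" using t by (intro mult_left_mono) auto
  finally have "real b * \<theta>\<^sup>2 * (c / m) * g - \<theta> * D \<le> real b * t * (\<eta> / 8) - real b * t * (\<eta> / 4)"
    using m by (simp add: \<theta>_def D_def field_simps)
  also have "\<dots> \<le> - (deviation_rate c \<eta> * real b)"
  proof -
    have "deviation_rate c \<eta> \<le> t * \<eta> / 8"
      unfolding deviation_rate_def t_def by (intro min.coboundedI2 min.cobounded1)
    then have "real b * deviation_rate c \<eta> \<le> real b * (t * \<eta> / 8)" by (rule mult_left_mono) simp
    then show ?thesis by (simp add: algebra_simps)
  qed
  finally have exponent: "real b * \<theta>\<^sup>2 * (c / m) * g - \<theta> * D \<le> - (deviation_rate c \<eta> * real b)" .
  have "seq_expectation m b \<beta> (\<lambda>B. of_bool (real b * g + D \<le> weight \<alpha> B)) \<le> exp (real b * \<theta>\<^sup>2 * (c / m) * g - \<theta> * D)"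
    unfolding g_def by (rule weight_upper_tail[OF \<beta> \<alpha> \<theta>])
  moreover have "seq_expectation m b \<beta> (\<lambda>B. of_bool (weight \<alpha> B \<le> real b * g - D)) \<le> exp (real b * \<theta>\<^sup>2 * (c / m) * g - \<theta> * D)"
    unfolding g_def by (rule weight_lower_tail[OF \<beta> \<alpha> \<theta>])
  moreover have "exp (real b * \<theta>\<^sup>2 * (c / m) * g - \<theta> * D) \<le> exp (- (deviation_rate c \<eta> * real b))"
    using exponent by simp
  ultimately show ?thesis unfolding seq_expectation_plus g_def by linarith
qed

lemma repeats_deviation:
  fixes c \<eta> :: real
  assumes \<beta>: "is_dist m \<beta>" "\<forall>j\<in>{1..m}. \<beta> j \<le> c / m"
    and c: "0 < c" and \<eta>: "0 < \<eta>" and m: "0 < m" and b: "real b \<le> \<eta> * m / (16 * c\<^sup>2)"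
  shows "seq_expectation m b \<beta> (\<lambda>B. of_bool (real b * \<eta> / (4 * c) \<le> repeats B))
         \<le> exp (- (deviation_rate c \<eta> * real b))"
proof -
  have "2 * real b * (c / m) \<le> \<eta> / (8 * c)"
    using b c m by (simp add: field_simps power2_eq_square)
  then have "real b * (2 * real b * (c / m)) \<le> real b * (\<eta> / (8 * c))" by (intro mult_left_mono) auto
  moreover have "real b * deviation_rate c \<eta> \<le> real b * (\<eta> / (8 * c))"
    unfolding deviation_rate_def by (intro mult_left_mono min.coboundedI2 min.cobounded2) auto
  moreover have "real b * \<eta> / (4 * c) = 2 * (real b * (\<eta> / (8 * c)))" using c by (simp add: field_simps)
  ultimately have "2 * real b ^ 2 * (c / m) - real b * \<eta> / (4 * c) \<le> - (deviation_rate c \<eta> * real b)"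
    by (simp add: power2_eq_square algebra_simps)
  moreover have "seq_expectation m b \<beta> (\<lambda>B. of_bool (real b * \<eta> / (4 * c) \<le> repeats B))
      \<le> exp (2 * real b ^ 2 * (c / m) - real b * \<eta> / (4 * c))"
    using repeats_upper_tail[OF \<beta>] c by simp
  ultimately show ?thesis by (meson exp_le_cancel_iff order_trans)
qed

lemma deviation_cases:
  fixes a b x q W g s C R r :: real
  assumes "0 < a" "0 < b" "0 \<le> s" "q \<le> W" "W \<le> q + C * R" "C * r = b * s / 4" "0 \<le> C"
    and deviation: "s \<le> \<bar>x / (a * b) - g\<bar>"
  shows "a * q + a * b * s / 2 \<le> x \<or> b * g + b * s / 4 \<le> W \<or> x \<le> a * q - a * b * s / 2
         \<or> W \<le> b * g - b * s / 4 \<or> r \<le> R"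
proof -
  have ab: "0 < a * b" using assms by simp
  from deviation consider "g + s \<le> x / (a * b)" | "x / (a * b) \<le> g - s" by linarith
  then show ?thesis
  proof cases
    case 1
    then have "a * b * (g + s) \<le> x" using ab by (simp add: pos_le_divide_eq mult.commute)
    show ?thesis
    proof (rule ccontr)
      assume "\<not> ?thesis"
      then have "x < a * q + a * b * s / 2" "W < b * g + b * s / 4" by auto
      with \<open>a * b * (g + s) \<le> x\<close> have "a * (b * g + b * s / 2) < a * q" by (simp add: algebra_simps)
      then have "b * g + b * s / 2 < q" using assms(1) by (simp add: mult_less_cancel_left_pos)
      moreover have "0 \<le> b * s" using assms(2,3) by simp
      ultimately show False using \<open>W < b * g + b * s / 4\<close> assms(4) by linarith
    qed
  next
    case 2
    then have "x \<le> a * b * (g - s)" using ab by (simp add: divide_le_eq mult.commute)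
    show ?thesis
    proof (rule ccontr)
      assume "\<not> ?thesis"
      then have "a * q - a * b * s / 2 < x" "b * g - b * s / 4 < W" "R < r" by auto
      with \<open>x \<le> a * b * (g - s)\<close> have "a * q < a * (b * g - b * s / 2)" by (simp add: algebra_simps)
      then have "q < b * g - b * s / 2" using assms(1) by (simp add: mult_less_cancel_left_pos)
      moreover have "C * R \<le> C * r" using \<open>R < r\<close> assms(7) by (intro mult_left_mono) auto
      ultimately show False using \<open>b * g - b * s / 4 < W\<close> assms(5,6) by linarith
    qed
  qed
qed

text \<open>Because \<open>mass \<alpha> B \<le> weight \<alpha> B \<le> mass \<alpha> B + C * repeats B\<close>, the hit rate can only be
  far from \<open>g\<close> if the hits are far from their conditional mean \<open>a * mass \<alpha> B\<close>, the weight is far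
  from its mean \<open>b * g\<close>, or \<open>B\<close> has many repeats.\<close>

lemma hit_rate_deviation_cases:
  fixes C s g r :: real
  assumes A: "A \<in> seqs m a" "1 \<le> a" and B: "B \<in> seqs m b" "1 \<le> b"
    and \<alpha>: "\<forall>j\<in>set B. 0 \<le> \<alpha> j \<and> \<alpha> j \<le> C"
    and s: "0 \<le> s" and C: "0 \<le> C" "C * r = real b * s / 4"
    and deviation: "s \<le> \<bar>hit_rate A B - g\<bar>"
  shows "real a * mass \<alpha> B + real a * real b * s / 2 \<le> real (hits A B)
    \<or> real b * g + real b * s / 4 \<le> weight \<alpha> B
    \<or> real (hits A B) \<le> real a * mass \<alpha> B - real a * real b * s / 2
    \<or> weight \<alpha> B \<le> real b * g - real b * s / 4 \<or> r \<le> real (repeats B)"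
proof -
  have "mass \<alpha> B \<le> weight \<alpha> B" "weight \<alpha> B \<le> mass \<alpha> B + C * repeats B"
    using mass_le_weight[of B \<alpha>] weight_le_mass_repeats[of B \<alpha> C] \<alpha> by auto
  then show ?thesis
    using deviation_cases[of "real a" "real b" s "mass \<alpha> B" "weight \<alpha> B" C "repeats B" r "real (hits A B)" g]
      A(2) B(2) s C deviation seqs_length[OF A(1)] seqs_length[OF B(1)]
    by (simp add: hit_rate_def)
qed

lemma hit_rate_concentration:
  fixes c \<eta> :: real
  assumes \<alpha>: "is_dist m \<alpha>" "\<forall>j\<in>{1..m}. \<alpha> j \<le> c / m"
    and \<beta>: "is_dist m \<beta>" "\<forall>j\<in>{1..m}. \<beta> j \<le> c / m"
    and c: "0 < c" and \<eta>: "0 < \<eta>" and m: "0 < m"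
    and a: "1 \<le> a" "a \<le> m" and b: "1 \<le> b" "real b \<le> \<eta> * m / (16 * c\<^sup>2)"
  shows "seq_expectation m a \<alpha> (\<lambda>A. seq_expectation m b \<beta> (\<lambda>B.
           of_bool (\<eta> / m \<le> \<bar>hit_rate A B - collision m \<alpha> \<beta>\<bar>)))
         \<le> 5 * exp (- (deviation_rate c \<eta> * (real a * real b / m)))"
proof -
  define s where "s = \<eta> / m"
  define g where "g = collision m \<alpha> \<beta>"
  define K where "K = exp (- (deviation_rate c \<eta> * (real a * real b / m)))"
  define hits_dev :: "nat list \<Rightarrow> nat list \<Rightarrow> real" where "hits_dev A B =
    of_bool (real a * mass \<alpha> B + real a * real b * s / 2 \<le> real (hits A B))
    + of_bool (real (hits A B) \<le> real a * mass \<alpha> B - real a * real b * s / 2)" for A B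
  define weight_dev :: "nat list \<Rightarrow> real" where "weight_dev B =
    of_bool (real b * g + real b * s / 4 \<le> weight \<alpha> B)
    + of_bool (weight \<alpha> B \<le> real b * g - real b * s / 4)" for B
  define repeats_dev :: "nat list \<Rightarrow> real" where "repeats_dev B = of_bool (real b * \<eta> / (4 * c) \<le> repeats B)" for B
  have \<alpha>_bounds: "\<forall>j\<in>{1..m}. 0 \<le> \<alpha> j \<and> \<alpha> j \<le> c / m" using \<alpha> by (auto simp: is_dist_def)
  have "real a * real b \<le> real m * real b" using a by (intro mult_right_mono) auto
  then have "real a * real b / m \<le> real b" using m by (simp add: field_simps)
  then have "deviation_rate c \<eta> * (real a * real b / m) \<le> deviation_rate c \<eta> * real b"
    using deviation_rate_pos[OF c \<eta>] by (intro mult_left_mono) auto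
  then have K: "exp (- (deviation_rate c \<eta> * real b)) \<le> K" unfolding K_def by simp
  have split: "of_bool (\<eta> / m \<le> \<bar>hit_rate A B - g\<bar>) \<le> hits_dev A B + weight_dev B + repeats_dev B"
    if A: "A \<in> seqs m a" and B: "B \<in> seqs m b" for A B
  proof -
    have "\<forall>j\<in>set B. 0 \<le> \<alpha> j \<and> \<alpha> j \<le> c / m" using \<alpha>_bounds seqs_letters[OF B] by auto
    moreover have "c / m * (real b * \<eta> / (4 * c)) = real b * s / 4" using c by (simp add: s_def)
    ultimately show ?thesis
      using hit_rate_deviation_cases[OF A a(1) B b(1), of \<alpha> "c / m" s "real b * \<eta> / (4 * c)" g] c \<eta>
      by (auto simp: hits_dev_def weight_dev_def repeats_dev_def s_def)
  qed
  have "seq_expectation m a \<alpha> (\<lambda>A. seq_expectation m b \<beta> (\<lambda>B.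
           of_bool (\<eta> / m \<le> \<bar>hit_rate A B - g\<bar>)))
      \<le> seq_expectation m a \<alpha> (\<lambda>A. seq_expectation m b \<beta> (\<lambda>B.
           hits_dev A B + (weight_dev B + repeats_dev B)))"
    using split by (intro seq_expectation_mono[OF \<alpha>(1)] seq_expectation_mono[OF \<beta>(1)]) (simp add: add.assoc)
  also have "\<dots> = seq_expectation m b \<beta> (\<lambda>B. seq_expectation m a \<alpha> (\<lambda>A. hits_dev A B))
      + seq_expectation m b \<beta> weight_dev + seq_expectation m b \<beta> repeats_dev"
    by (simp add: seq_expectation_plus seq_expectation_const[OF \<alpha>(1)] seq_expectation_swap[of m a \<alpha>])
  also have "\<dots> \<le> seq_expectation m b \<beta> (\<lambda>B. 2 * K) + 2 * K + K"
  proof (intro add_mono seq_expectation_mono[OF \<beta>(1)])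
    show "seq_expectation m a \<alpha> (\<lambda>A. hits_dev A B) \<le> 2 * K" if "B \<in> seqs m b" for B
      using hits_deviation[OF \<alpha> c \<eta> m that] by (simp add: hits_dev_def K_def s_def)
    have "seq_expectation m b \<beta> weight_dev \<le> 2 * exp (- (deviation_rate c \<eta> * real b))"
      using weight_deviation[OF \<beta>(1) \<alpha>_bounds c \<eta> m, of b]
      by (simp add: weight_dev_def[abs_def] g_def s_def)
    then show "seq_expectation m b \<beta> weight_dev \<le> 2 * K" using K by linarith
    show "seq_expectation m b \<beta> repeats_dev \<le> K"
      using repeats_deviation[OF \<beta> c \<eta> m b(2)] K by (simp add: repeats_dev_def[abs_def])
  qed
  also have "\<dots> = 5 * K" by (simp add: seq_expectation_const[OF \<beta>(1)])
  finally show ?thesis unfolding g_def K_def .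
qed

section \<open>The classifier\<close>

definition test_statistic :: "nat \<Rightarrow> nat list \<Rightarrow> nat list \<Rightarrow> nat list \<Rightarrow> real" where
  "test_statistic h x y z =
     hit_rate z (take h y) - hit_rate z (take h x)
     - (hit_rate (take h y) (drop h y) - hit_rate (take h x) (drop h x)) / 2"

definition classifier :: "nat \<Rightarrow> nat list \<Rightarrow> nat list \<Rightarrow> nat list \<Rightarrow> bool" where
  "classifier N x y z \<longleftrightarrow> 0 < test_statistic (N div 2) x y z"

lemma prob_decide_eq_seq_expectation:
  "prob_decide m N n \<phi> b \<pi> \<mu> \<nu> = seq_expectation m N \<pi> (\<lambda>x. seq_expectation m N \<mu> (\<lambda>y.
     seq_expectation m n \<nu> (\<lambda>z. of_bool (\<phi> x y z = b))))"
  unfolding prob_decide_def seq_expectation_def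
  by (simp add: sum_distrib_left mult.assoc if_distrib of_bool_def cong: if_cong)

lemma seq_expectation_take_swap:
  assumes "h \<le> N" "is_dist m \<mu>"
  shows "seq_expectation m N \<mu> (\<lambda>y. seq_expectation m n \<nu> (\<lambda>z. f z (take h y)))
       = seq_expectation m n \<nu> (\<lambda>z. seq_expectation m h \<mu> (f z))"
  by (subst seq_expectation_swap) (simp add: seq_expectation_take[OF assms])

lemma sample_product_bounds:
  fixes N n m :: nat
  assumes "3 \<le> N"
  defines "h \<equiv> N div 2"
  shows "min (real N ^ 2) (real N * real n) / m / 6 \<le> real n * real h / m"
    and "min (real N ^ 2) (real N * real n) / m / 6 \<le> real h * real (N - h) / m"
proof -
  have h: "real N \<le> 3 * real h" "real N \<le> 2 * real (N - h)" using assms unfolding h_def by linarith+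
  have "min (real N ^ 2) (real N * real n) \<le> real N * real n"
    "min (real N ^ 2) (real N * real n) \<le> real N * real N"
    by (simp_all add: power2_eq_square)
  moreover have "real N * real n \<le> 3 * (real n * real h)" "real N * real N \<le> 6 * (real h * real (N - h))"
    using mult_right_mono[OF h(1), of "real n"] mult_mono[OF h(1) h(2)] by (simp_all add: mult_ac)
  moreover have "0 \<le> real n * real h" "0 \<le> real h * real (N - h)" by simp_all
  ultimately have "min (real N ^ 2) (real N * real n) / 6 \<le> real n * real h"
    "min (real N ^ 2) (real N * real n) / 6 \<le> real h * real (N - h)"
    by linarith+
  moreover have "min (real N ^ 2) (real N * real n) / m / 6 = min (real N ^ 2) (real N * real n) / 6 / m"
    by simp
  ultimately show "min (real N ^ 2) (real N * real n) / m / 6 \<le> real n * real h / m"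
    "min (real N ^ 2) (real N * real n) / m / 6 \<le> real h * real (N - h) / m"
    by (simp_all only:) (intro divide_right_mono; simp)+
qed

lemma error_probability_le:
  fixes N n m :: nat and c \<eta> :: real
  defines "h \<equiv> N div 2" and "R \<equiv> min (real N ^ 2) (real N * real n) / m / 6"
  assumes \<pi>: "is_dist m \<pi>" "\<forall>j\<in>{1..m}. \<pi> j \<le> c / m"
    and \<mu>: "is_dist m \<mu>" "\<forall>j\<in>{1..m}. \<mu> j \<le> c / m"
    and \<nu>: "is_dist m \<nu>" "\<forall>j\<in>{1..m}. \<nu> j \<le> c / m"
    and c: "0 < c" and \<eta>: "0 < \<eta>" and m: "0 < m"
    and N: "3 \<le> N" "N \<le> m" "real N \<le> \<eta> * m / (16 * c\<^sup>2)" and n: "1 \<le> n" "n \<le> m"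
    and errs: "\<And>x y z. x \<in> seqs m N \<Longrightarrow> y \<in> seqs m N \<Longrightarrow> z \<in> seqs m n \<Longrightarrow> \<phi> x y z = b \<Longrightarrow>
        \<eta> / m \<le> \<bar>hit_rate z (take h y) - collision m \<nu> \<mu>\<bar>
        \<or> \<eta> / m \<le> \<bar>hit_rate z (take h x) - collision m \<nu> \<pi>\<bar>
        \<or> \<eta> / m \<le> \<bar>hit_rate (take h y) (drop h y) - collision m \<mu> \<mu>\<bar>
        \<or> \<eta> / m \<le> \<bar>hit_rate (take h x) (drop h x) - collision m \<pi> \<pi>\<bar>"
  shows "prob_decide m N n \<phi> b \<pi> \<mu> \<nu> \<le> 20 * exp (- (deviation_rate c \<eta> * R))"
proof -
  define dev :: "(nat \<Rightarrow> real) \<Rightarrow> (nat \<Rightarrow> real) \<Rightarrow> nat list \<Rightarrow> nat list \<Rightarrow> real"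
    where "dev \<alpha> \<beta> A B = of_bool (\<eta> / m \<le> \<bar>hit_rate A B - collision m \<alpha> \<beta>\<bar>)" for \<alpha> \<beta> A B
  define K where "K = 5 * exp (- (deviation_rate c \<eta> * R))"
  have h: "1 \<le> h" "h \<le> N" "1 \<le> N - h" using N(1) unfolding h_def by linarith+
  have small: "real h \<le> \<eta> * m / (16 * c\<^sup>2)" "real (N - h) \<le> \<eta> * m / (16 * c\<^sup>2)"
    using h(2) N(3) by linarith+
  have R: "R \<le> real n * real h / m" "R \<le> real h * real (N - h) / m"
    using sample_product_bounds[OF N(1)] unfolding R_def h_def by simp_all
  have conc: "seq_expectation m a \<alpha> (\<lambda>A. seq_expectation m b \<beta> (dev \<alpha> \<beta> A)) \<le> K"
    if "is_dist m \<alpha>" "\<forall>j\<in>{1..m}. \<alpha> j \<le> c / m" "is_dist m \<beta>" "\<forall>j\<in>{1..m}. \<beta> j \<le> c / m"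
      "1 \<le> a" "a \<le> m" "1 \<le> b" "real b \<le> \<eta> * m / (16 * c\<^sup>2)" "R \<le> real a * real b / m"
    for \<alpha> \<beta> a b
  proof -
    have "deviation_rate c \<eta> * R \<le> deviation_rate c \<eta> * (real a * real b / m)"
      using deviation_rate_pos[OF c \<eta>] that(9) by (intro mult_left_mono) auto
    then have "exp (- (deviation_rate c \<eta> * (real a * real b / m))) \<le> exp (- (deviation_rate c \<eta> * R))"
      by simp
    then show ?thesis
      using hit_rate_concentration[OF that(1-4) c \<eta> m that(5-8)]
      unfolding K_def dev_def[abs_def] by linarith
  qed
  have pointwise: "of_bool (\<phi> x y z = b) \<le> dev \<nu> \<mu> z (take h y) + dev \<nu> \<pi> z (take h x)
      + dev \<mu> \<mu> (take h y) (drop h y) + dev \<pi> \<pi> (take h x) (drop h x)"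
    if "x \<in> seqs m N" "y \<in> seqs m N" "z \<in> seqs m n" for x y z
    using errs[OF that] by (auto simp: dev_def)
  have "prob_decide m N n \<phi> b \<pi> \<mu> \<nu>
      \<le> seq_expectation m N \<pi> (\<lambda>x. seq_expectation m N \<mu> (\<lambda>y. seq_expectation m n \<nu> (\<lambda>z.
           dev \<nu> \<mu> z (take h y) + dev \<nu> \<pi> z (take h x)
           + dev \<mu> \<mu> (take h y) (drop h y) + dev \<pi> \<pi> (take h x) (drop h x))))"
    unfolding prob_decide_eq_seq_expectation
    by (intro seq_expectation_mono[OF \<pi>(1)] seq_expectation_mono[OF \<mu>(1)] seq_expectation_mono[OF \<nu>(1)]
        pointwise)
  also have "\<dots> = seq_expectation m n \<nu> (\<lambda>z. seq_expectation m h \<mu> (dev \<nu> \<mu> z))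
      + seq_expectation m n \<nu> (\<lambda>z. seq_expectation m h \<pi> (dev \<nu> \<pi> z))
      + seq_expectation m h \<mu> (\<lambda>A. seq_expectation m (N - h) \<mu> (dev \<mu> \<mu> A))
      + seq_expectation m h \<pi> (\<lambda>A. seq_expectation m (N - h) \<pi> (dev \<pi> \<pi> A))"
    by (simp add: seq_expectation_plus seq_expectation_const \<pi>(1) \<mu>(1) \<nu>(1)
        seq_expectation_take_swap[OF h(2)] seq_expectation_split[OF h(2)])
  also have "\<dots> \<le> K + K + K + K"
    using h n R small N(2) \<pi> \<mu> \<nu> by (intro add_mono conc) auto
  finally show ?thesis unfolding K_def by simp
qed

lemma collision_distance_ge:
  assumes "admissible \<epsilon> c m \<pi> \<mu>" "0 < \<epsilon>" "0 < m"
  shows "\<epsilon>\<^sup>2 / m \<le> collision m \<mu> \<mu> - 2 * collision m \<pi> \<mu> + collision m \<pi> \<pi>"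
proof -
  have "\<epsilon> \<le> (\<Sum>j\<in>{1..m}. \<bar>\<mu> j - \<pi> j\<bar>)" using assms(1) by (simp add: admissible_def)
  then have "\<epsilon>\<^sup>2 \<le> (\<Sum>j\<in>{1..m}. \<bar>\<mu> j - \<pi> j\<bar>)\<^sup>2" using assms(2) by (intro power_mono) auto
  also have "\<dots> \<le> (\<Sum>j\<in>{1..m}. \<bar>\<mu> j - \<pi> j\<bar>\<^sup>2) * card {1..m}"
    by (rule sum_squared_le_sum_of_squares)
  also have "(\<Sum>j\<in>{1..m}. \<bar>\<mu> j - \<pi> j\<bar>\<^sup>2) = collision m \<mu> \<mu> - 2 * collision m \<pi> \<mu> + collision m \<pi> \<pi>"
    by (simp add: collision_def power2_eq_square algebra_simps sum.distrib sum_subtractf sum_distrib_left)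
  finally show ?thesis using assms(3) by (simp add: divide_le_eq)
qed

lemma test_statistic_positive_deviation:
  assumes "admissible \<epsilon> c m \<pi> \<mu>" "0 < \<epsilon>" "0 < m" "0 < test_statistic h x y z"
  shows "\<epsilon>\<^sup>2 / 6 / m \<le> \<bar>hit_rate z (take h y) - collision m \<pi> \<mu>\<bar>
    \<or> \<epsilon>\<^sup>2 / 6 / m \<le> \<bar>hit_rate z (take h x) - collision m \<pi> \<pi>\<bar>
    \<or> \<epsilon>\<^sup>2 / 6 / m \<le> \<bar>hit_rate (take h y) (drop h y) - collision m \<mu> \<mu>\<bar>
    \<or> \<epsilon>\<^sup>2 / 6 / m \<le> \<bar>hit_rate (take h x) (drop h x) - collision m \<pi> \<pi>\<bar>"
  using collision_distance_ge[OF assms(1-3)] assms(4)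
  unfolding test_statistic_def by (auto simp: abs_less_iff not_le)

lemma test_statistic_nonpositive_deviation:
  assumes "admissible \<epsilon> c m \<pi> \<mu>" "0 < \<epsilon>" "0 < m" "\<not> 0 < test_statistic h x y z"
  shows "\<epsilon>\<^sup>2 / 6 / m \<le> \<bar>hit_rate z (take h y) - collision m \<mu> \<mu>\<bar>
    \<or> \<epsilon>\<^sup>2 / 6 / m \<le> \<bar>hit_rate z (take h x) - collision m \<mu> \<pi>\<bar>
    \<or> \<epsilon>\<^sup>2 / 6 / m \<le> \<bar>hit_rate (take h y) (drop h y) - collision m \<mu> \<mu>\<bar>
    \<or> \<epsilon>\<^sup>2 / 6 / m \<le> \<bar>hit_rate (take h x) (drop h x) - collision m \<pi> \<pi>\<bar>"
  using collision_distance_ge[OF assms(1-3)] assms(4) collision_commute[of m \<mu> \<pi>]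
  unfolding test_statistic_def by (auto simp: abs_less_iff not_le)

lemma worst_error_classifier_le:
  fixes N n m :: nat and \<epsilon> c :: real
  assumes c: "0 < c" and \<epsilon>: "0 < \<epsilon>" and m: "0 < m"
    and N: "3 \<le> N" "N \<le> m" "real N \<le> \<epsilon>\<^sup>2 / 6 * m / (16 * c\<^sup>2)" and n: "1 \<le> n" "n \<le> m"
  shows "worst_error \<epsilon> c m N n (classifier N)
    \<le> ereal (20 * exp (- (deviation_rate c (\<epsilon>\<^sup>2 / 6) * (min (real N ^ 2) (real N * real n) / m / 6))))"
  unfolding worst_error_def
proof (rule SUP_least, clarify)
  fix \<pi> \<mu> assume adm: "admissible \<epsilon> c m \<pi> \<mu>"
  then have \<pi>: "is_dist m \<pi>" "\<forall>j\<in>{1..m}. \<pi> j \<le> c / m"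
    and \<mu>: "is_dist m \<mu>" "\<forall>j\<in>{1..m}. \<mu> j \<le> c / m"
    by (auto simp: admissible_def)
  have \<eta>: "0 < \<epsilon>\<^sup>2 / 6" using \<epsilon> by simp
  note bound = error_probability_le[OF _ _ _ _ _ _ c \<eta> m N n]
  have "prob_decide m N n (classifier N) True \<pi> \<mu> \<pi>
      \<le> 20 * exp (- (deviation_rate c (\<epsilon>\<^sup>2 / 6) * (min (real N ^ 2) (real N * real n) / m / 6)))"
    by (rule bound[OF \<pi> \<mu> \<pi>]) (auto simp: classifier_def dest: test_statistic_positive_deviation[OF adm \<epsilon> m])
  moreover have "prob_decide m N n (classifier N) False \<pi> \<mu> \<mu>
      \<le> 20 * exp (- (deviation_rate c (\<epsilon>\<^sup>2 / 6) * (min (real N ^ 2) (real N * real n) / m / 6)))"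
    by (rule bound[OF \<pi> \<mu> \<mu>]) (auto simp: classifier_def dest: test_statistic_nonpositive_deviation[OF adm \<epsilon> m])
  ultimately show "ereal (1 / 2 * prob_decide m N n (classifier N) True \<pi> \<mu> \<pi>
      + 1 / 2 * prob_decide m N n (classifier N) False \<pi> \<mu> \<mu>)
    \<le> ereal (20 * exp (- (deviation_rate c (\<epsilon>\<^sup>2 / 6) * (min (real N ^ 2) (real N * real n) / m / 6))))"
    by simp
qed

section \<open>The error exponent\<close>

lemma eln_scaled_le:
  fixes W :: ereal and C k r :: real
  assumes W: "W \<le> ereal (C * exp (- (k * r)))" and C: "0 < C" and r: "0 < r" "2 * ln C \<le> k * r"
  shows "eln W * ereal (1 / r) \<le> ereal (- k / 2)"
proof (cases "W \<le> 0")
  case True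
  then show ?thesis using r by (simp add: eln_def)
next
  case False
  with W obtain w where w: "W = ereal w" "0 < w" by (cases W) auto
  have "ln w \<le> ln (C * exp (- (k * r)))" using W w C by simp
  also have "\<dots> = ln C - k * r" using C by (simp add: ln_mult)
  finally have "ln w * (1 / r) \<le> (ln C - k * r) * (1 / r)" using r by (intro mult_right_mono) auto
  also have "\<dots> \<le> - k / 2" using r by (simp add: field_simps)
  finally show ?thesis using w by (simp add: eln_def)
qed

lemma error_exponent_pos_if_exponential_bound:
  assumes k: "0 < k" and C: "0 < C" and rate: "filterlim (rate N n) at_top sequentially"
    and bound: "eventually (\<lambda>m. worst_error \<epsilon> c m (N m) (n m) (\<phi> m) \<le> ereal (C * exp (- (k * rate N n m))))
      sequentially"
  shows "0 < error_exponent \<epsilon> c N n \<phi>"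
proof -
  have "eventually (\<lambda>m. max 1 (2 * ln C / k) \<le> rate N n m) sequentially"
    using rate unfolding filterlim_at_top by blast
  with bound have "eventually (\<lambda>m. eln (worst_error \<epsilon> c m (N m) (n m) (\<phi> m)) * ereal (1 / rate N n m)
      \<le> ereal (- k / 2)) sequentially"
  proof eventually_elim
    case (elim m)
    then have "0 < rate N n m" "2 * ln C \<le> k * rate N n m" using k by (auto simp: field_simps)
    with elim(1) C show ?case by (rule eln_scaled_le)
  qed
  then have "limsup (\<lambda>m. eln (worst_error \<epsilon> c m (N m) (n m) (\<phi> m)) * ereal (1 / rate N n m)) \<le> ereal (- k / 2)"
    by (rule Limsup_bounded)
  then have "- ereal (- k / 2) \<le> error_exponent \<epsilon> c N n \<phi>"
    unfolding error_exponent_def by (subst ereal_minus_le_minus)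
  then have "ereal (k / 2) \<le> error_exponent \<epsilon> c N n \<phi>" by simp
  moreover have "0 < ereal (k / 2)" using k by simp
  ultimately show ?thesis by order
qed

lemma rate_filterlim_at_top:
  assumes "(\<lambda>m. real m) \<in> o(\<lambda>m. min (real (N m) ^ 2) (real (N m) * real (n m)))"
  shows "filterlim (rate N n) at_top sequentially"
  unfolding filterlim_at_top
proof
  fix Z :: real
  define T where "T = max 1 Z"
  have "eventually (\<lambda>m. real m \<le> 1 / T * min (real (N m) ^ 2) (real (N m) * real (n m))) sequentially"
    using landau_o.smallD[OF assms, of "1 / T"] by (auto simp: T_def elim!: eventually_mono)
  with eventually_gt_at_top[of 0] show "eventually (\<lambda>m. Z \<le> rate N n m) sequentially"
  proof eventually_elim
    case (elim m)
    then have "T * real m \<le> min (real (N m) ^ 2) (real (N m) * real (n m))"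
      by (simp add: T_def field_simps)
    then have "T \<le> rate N n m" using elim(1) by (simp add: rate_def field_simps)
    then show ?case by (simp add: T_def)
  qed
qed

lemma eventually_le_of_small_o:
  assumes "f \<in> o(\<lambda>m. real m)" "0 < K"
  shows "eventually (\<lambda>m. f m \<le> K * real m) sequentially"
  using landau_o.smallD[OF assms] by (auto elim!: eventually_mono)

theorem theorem2:
  fixes N n :: "nat \<Rightarrow> nat" and \<epsilon> cbar :: real
  assumes "\<epsilon> > 0" and "cbar > 0"
    and "\<forall>m. N m \<ge> 1" and "\<forall>m. n m \<ge> 1"
    and "filterlim N at_top sequentially" and "filterlim n at_top sequentially"
    and "(\<lambda>m. real (N m)) \<in> o(\<lambda>m. real m)"
    and "(\<lambda>m. real (n m)) \<in> o(\<lambda>m. real m)"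
    and "(\<lambda>m. real m) \<in> o(\<lambda>m. min (real (N m) ^ 2) (real (N m) * real (n m)))"
  shows "\<exists>\<phi> :: nat \<Rightarrow> nat list \<Rightarrow> nat list \<Rightarrow> nat list \<Rightarrow> bool.
           error_exponent \<epsilon> cbar N n \<phi> > 0"
proof
  define \<kappa> where "\<kappa> = deviation_rate cbar (\<epsilon>\<^sup>2 / 6)"
  have \<kappa>: "0 < \<kappa>" unfolding \<kappa>_def using deviation_rate_pos assms(1,2) by simp
  have "eventually (\<lambda>m. real (N m) \<le> \<epsilon>\<^sup>2 / 6 / (16 * cbar\<^sup>2) * real m) sequentially"
    using assms(1,2) by (intro eventually_le_of_small_o assms(7)) simp
  moreover have "eventually (\<lambda>m. 3 \<le> N m) sequentially"
    using assms(5) by (simp add: filterlim_at_top)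
  moreover note eventually_gt_at_top[of 0]
    eventually_le_of_small_o[OF assms(7) zero_less_one] eventually_le_of_small_o[OF assms(8) zero_less_one]
  ultimately have "eventually (\<lambda>m. worst_error \<epsilon> cbar m (N m) (n m) (classifier (N m))
      \<le> ereal (20 * exp (- (\<kappa> / 6 * rate N n m)))) sequentially"
  proof eventually_elim
    case (elim m)
    then show ?case
      using worst_error_classifier_le[OF assms(2,1), of m "N m" "n m"] assms(4)
      by (simp add: \<kappa>_def rate_def mult.commute)
  qed
  then show "0 < error_exponent \<epsilon> cbar N n (\<lambda>m. classifier (N m))"
    using \<kappa> rate_filterlim_at_top[OF assms(9)]
    by (intro error_exponent_pos_if_exponential_bound[where k = "\<kappa> / 6" and C = 20]) auto
qed

end
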